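(* Suppose $\Lambda((0,1])>0$. Then there exists a constant $C_1>0$, depending on $\Lambda$ but not on $n$ or $k$, such that for all integers $2\le k\le n$, $$E\Big[\int_0^{\tau_{k,n}}\frac{1}{N_n(s)}\,ds\Big]\le\frac{C_1}{k}.$$
   Context: Let $\Lambda$ be a finite measure on $[0,1]$. For $n\ge 1$, the $\Lambda$-coalescent started with $n$ blocks, $(\Pi_n(t))_{t\ge0}$, is the continuous-time Markov chain on partitions of $\{1,\dots,n\}$, started from the partition into singletons, in which, whenever there are $b$ blocks, each particular collection of $k\ge2$ blocks merges into a single block at rate $\lambda_{b,k}=\int_{[0,1]}p^{k-2}(1-p)^{b-k}\,\Lambda(dp)$, and no other transitions occur. $N_n(t)$ is the number of blocks of $\Pi_n(t)$, and $\tau_{k,n}=\inf\{t\ge0:N_n(t)<k\}$. *)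

theory Defs
  imports "HOL-Probability.Probability"
begin

text \<open>A partition of a finite set of labels is represented as a set of (nonempty) blocks.\<close>
type_synonym partition = "nat set set"

definition finite_measure_on_unit :: "real measure \<Rightarrow> bool" where
  "finite_measure_on_unit L \<longleftrightarrow> finite_measure L \<and> space L = {0..1}
     \<and> sets L = sets (restrict_space borel {0..1::real})"

text \<open>The rate lambda(b,k) at which a particular collection of k of b blocks merges.\<close>
definition coal_rate :: "real measure \<Rightarrow> nat \<Rightarrow> nat \<Rightarrow> real" where
  "coal_rate L b k = (\<integral>p. p ^ (k - 2) * (1 - p) ^ (b - k) \<partial>L)"

definition merge_sets :: "partition \<Rightarrow> partition set" where
  "merge_sets P = {S. S \<subseteq> P \<and> 2 \<le> card S}"

definition total_rate :: "real measure \<Rightarrow> partition \<Rightarrow> real" where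
  "total_rate L P = (\<Sum>S\<in>merge_sets P. coal_rate L (card P) (card S))"

definition coal_step :: "real measure \<Rightarrow> partition \<Rightarrow> partition pmf" where
  "coal_step L P = (if card P \<le> 1 then return_pmf P
     else map_pmf (\<lambda>S. insert (\<Union>S) (P - S))
       (embed_pmf (\<lambda>S. if S \<in> merge_sets P
                        then coal_rate L (card P) (card S) / total_rate L P else 0)))"

text \<open>The first m+1 states of the jump chain started in P.\<close>
fun jump_chain :: "real measure \<Rightarrow> nat \<Rightarrow> partition \<Rightarrow> partition list pmf" where
  "jump_chain L 0 P = return_pmf [P]"
| "jump_chain L (Suc m) P =
     bind_pmf (coal_step L P) (\<lambda>Q. map_pmf (\<lambda>xs. P # xs) (jump_chain L m Q))"

definition singletons :: "nat \<Rightarrow> partition" where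
  "singletons n = (\<lambda>i. {i}) ` {1..n}"

text \<open>Probability space of the Lambda-coalescent started with n blocks: the jump chain
  (n steps suffice, the chain being absorbed after at most n-1 jumps) together with
  i.i.d. standard exponential variables used for the holding times.\<close>
definition coal_space :: "real measure \<Rightarrow> nat \<Rightarrow> (partition list \<times> (nat \<Rightarrow> real)) measure" where
  "coal_space L n = measure_pmf (jump_chain L n (singletons n))
     \<Otimes>\<^sub>M PiM UNIV (\<lambda>_::nat. density lborel (exponential_density 1))"

text \<open>Holding time in the i-th state: exponential with parameter the total jump rate.\<close>
definition hold :: "real measure \<Rightarrow> partition list \<times> (nat \<Rightarrow> real) \<Rightarrow> nat \<Rightarrow> real" where
  "hold L \<omega> i = snd \<omega> i / total_rate L (fst \<omega> ! i)"

text \<open>The partition Pi_n(t): the state after all jumps that happened by time t.\<close>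
definition coal_state :: "real measure \<Rightarrow> partition list \<times> (nat \<Rightarrow> real) \<Rightarrow> real \<Rightarrow> partition" where
  "coal_state L \<omega> t = fst \<omega> ! card {j \<in> {1..<length (fst \<omega>)}.
        2 \<le> card (fst \<omega> ! (j - 1)) \<and> (\<Sum>i<j. hold L \<omega> i) \<le> t}"

definition num_blocks :: "real measure \<Rightarrow> partition list \<times> (nat \<Rightarrow> real) \<Rightarrow> real \<Rightarrow> nat" where
  "num_blocks L \<omega> t = card (coal_state L \<omega> t)"

definition tau :: "real measure \<Rightarrow> nat \<Rightarrow> partition list \<times> (nat \<Rightarrow> real) \<Rightarrow> real" where
  "tau L k \<omega> = Inf {t. 0 \<le> t \<and> num_blocks L \<omega> t < k}"

end

theory Submission
  imports Defs
begin

text \<open>Write \<open>m = \<Lambda>((0,1])\<close>. Grouping the mergers of a state with \<open>b \<ge> 2\<close> blocks by their size,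
  the rate-weighted number of blocks lost per merger is \<open>\<integral> E (X\<^sub>p - 1)\<^sup>+ / p\<^sup>2 \<Lambda>(dp)\<close> with
  \<open>X\<^sub>p\<close> binomial with parameters \<open>b\<close> and \<open>p\<close>, which is at least \<open>b m / 2\<close>. Hence the function
  \<open>V(b) = (2/m) (2/k - 1/max b (k/2))\<close> of the number of blocks decreases in expectation over one jump
  from \<open>b \<ge> k\<close> blocks by at least \<open>1 / (b \<gamma>\<^sub>b)\<close>, where \<open>\<gamma>\<^sub>b\<close> is the total jump rate; this is the
  expected contribution of the holding time in that state to \<open>\<integral> 1/N\<close>. Summing along the jump
  chain gives \<open>E \<integral>\<^sub>0\<^sup>\<tau> 1/N \<le> V(n) \<le> 4 / (m k)\<close>.\<close>

lemma one_minus_power_ge_quadratic: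
  fixes p :: real
  assumes "0 \<le> p" "p \<le> 1" "2 \<le> b"
  shows "1 - real b * p + real b * p\<^sup>2 / 2 \<le> (1 - p) ^ b"
  using assms(3)
proof (induction b rule: dec_induct)
  case base
  then show ?case by (simp add: power2_eq_square algebra_simps)
next
  case (step b)
  have "(1 - p) ^ b \<le> 1 - p"
    using assms step(1) power_decreasing[of 1 b "1 - p"] by simp
  then have "p * p \<le> p - p * (1 - p) ^ b"
    using assms mult_left_mono[of "(1 - p) ^ b" "1 - p" p] by (simp add: algebra_simps)
  moreover have "(1 - p) ^ Suc b = (1 - p) ^ b - p * (1 - p) ^ b"
    by (simp add: algebra_simps)
  moreover have "real (Suc b) * p\<^sup>2 / 2 = real b * p\<^sup>2 / 2 + p * p / 2"
    by (simp add: algebra_simps power2_eq_square)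
  moreover have "real (Suc b) * p = real b * p + p"
    by (simp add: algebra_simps)
  ultimately show ?case
    using step(3) zero_le_square[of p] by linarith
qed

lemma sum_binomial_times_index:
  fixes p q :: real
  shows "(\<Sum>j\<le>b. real (b choose j) * real j * p ^ j * q ^ (b - j)) = real b * p * (p + q) ^ (b - 1)"
proof (cases b)
  case 0
  then show ?thesis by simp
next
  case (Suc c)
  have "(\<Sum>j\<le>Suc c. real (Suc c choose j) * real j * p ^ j * q ^ (Suc c - j))
      = (\<Sum>j\<le>c. real (Suc c choose Suc j) * real (Suc j) * p ^ Suc j * q ^ (c - j))"
    by (subst sum.atMost_Suc_shift) simp
  also have "\<dots> = (\<Sum>j\<le>c. real (Suc c) * p * (real (c choose j) * p ^ j * q ^ (c - j)))"
  proof (intro sum.cong refl)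
    fix j
    have "real (Suc c choose Suc j) * real (Suc j) = real (Suc c) * real (c choose j)"
      using Suc_times_binomial[of j c] by (metis mult.commute of_nat_mult)
    then show "real (Suc c choose Suc j) * real (Suc j) * p ^ Suc j * q ^ (c - j)
        = real (Suc c) * p * (real (c choose j) * p ^ j * q ^ (c - j))"
      by (simp add: algebra_simps)
  qed
  also have "\<dots> = real (Suc c) * p * (p + q) ^ c"
    by (simp add: sum_distrib_left[symmetric] binomial_ring atLeast0AtMost)
  finally show ?thesis using Suc by simp
qed

text \<open>Multiplied by \<open>p\<^sup>2\<close>, the sum is \<open>E (X - 1) + P (X = 0) = b p - 1 + (1 - p)\<^sup>b\<close> for \<open>X\<close>
  binomially distributed with parameters \<open>b\<close> and \<open>p\<close>.\<close>
lemma sum_binomial_excess_ge: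
  fixes p :: real
  assumes "0 < p" "p \<le> 1" "2 \<le> b"
  shows "real b / 2 \<le> (\<Sum>j=2..b. real (b choose j) * real (j - 1) * p ^ (j - 2) * (1 - p) ^ (b - j))"
proof -
  let ?q = "1 - p"
  let ?t = "\<lambda>j. real (b choose j) * (real j - 1) * p ^ j * ?q ^ (b - j)"
  have total: "(\<Sum>j\<le>b. real (b choose j) * p ^ j * ?q ^ (b - j)) = 1"
    using binomial_ring[of p ?q b] by (simp add: atLeast0AtMost mult.commute mult.left_commute)
  have mean: "(\<Sum>j\<le>b. real (b choose j) * real j * p ^ j * ?q ^ (b - j)) = real b * p"
    using sum_binomial_times_index[of b p ?q] by simp
  have "(\<Sum>j\<le>b. ?t j) = real b * p - 1"
    using total mean by (simp add: algebra_simps sum_subtractf)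
  moreover have "{..b} = {0, 1} \<union> {2..b}" using assms by auto
  then have "(\<Sum>j\<le>b. ?t j) = (\<Sum>j\<in>{0, 1}. ?t j) + (\<Sum>j=2..b. ?t j)"
    by (simp only:) (rule sum.union_disjoint, auto)
  ultimately have excess: "(\<Sum>j=2..b. ?t j) = real b * p - 1 + ?q ^ b"
    by simp
  have "p\<^sup>2 * (\<Sum>j=2..b. real (b choose j) * real (j - 1) * p ^ (j - 2) * ?q ^ (b - j)) = (\<Sum>j=2..b. ?t j)"
    unfolding sum_distrib_left
  proof (intro sum.cong refl)
    fix j assume "j \<in> {2..b}"
    then have j: "2 \<le> j" by simp
    then have "p\<^sup>2 * p ^ (j - 2) = p ^ j"
      by (metis le_add_diff_inverse power_add)
    moreover have "real (j - 1) = real j - 1"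
      using j by (simp add: of_nat_diff)
    ultimately
    show "p\<^sup>2 * (real (b choose j) * real (j - 1) * p ^ (j - 2) * ?q ^ (b - j)) = ?t j"
      by (simp add: ac_simps)
  qed
  also have "\<dots> \<ge> p\<^sup>2 * (real b / 2)"
    unfolding excess using one_minus_power_ge_quadratic[of p b] assms by (simp add: field_simps)
  finally show ?thesis using assms by simp
qed

lemma inverse_max_diff_ge:
  fixes b b' c k :: real
  assumes "0 < k" "k \<le> b" "0 \<le> b'" "b' + c \<le> b + 1" "1 \<le> c" "c \<le> b"
  shows "(c - 1) / b\<^sup>2 \<le> 1 / max b' (k / 2) - 1 / b"
proof (cases "k / 2 \<le> b'")
  case True
  have b: "0 < b" "0 < b'" "b' \<le> b" using True assms by linarith+
  have "(c - 1) / b\<^sup>2 \<le> (b - b') / b\<^sup>2"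
    using assms by (intro divide_right_mono) auto
  also have "\<dots> \<le> (b - b') / (b * b')"
    using b by (intro divide_left_mono) (auto simp: power2_eq_square)
  also have "\<dots> = 1 / b' - 1 / b"
    using b by (simp add: field_simps)
  finally show ?thesis using True by simp
next
  case False
  have "(c - 1) / b\<^sup>2 \<le> b / b\<^sup>2"
    using assms by (intro divide_right_mono) auto
  also have "\<dots> = 2 / b - 1 / b"
    by (simp add: power2_eq_square)
  also have "2 / b \<le> 2 / k"
    using assms by (intro divide_left_mono) auto
  finally show ?thesis using False by simp
qed

section \<open>Exponential holding times\<close>

lemma nn_integral_exponential_mean:
  assumes "0 < l"
  shows "(\<integral>\<^sup>+ x. ennreal x \<partial>density lborel (exponential_density l)) = ennreal (1 / l)"
proof -
  have "(\<integral>\<^sup>+ x. ennreal x \<partial>density lborel (exponential_density l))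
      = (\<integral>\<^sup>+ x. ennreal (exponential_density l x) * ennreal x \<partial>lborel)"
    by (rule nn_integral_density) auto
  also have "\<dots> = (\<integral>\<^sup>+ x. ennreal (exponential_density l x * x ^ 1) \<partial>lborel)"
    using assms by (intro nn_integral_cong) (simp add: ennreal_mult')
  also have "\<dots> = ennreal (1 / l)"
    using nn_integral_erlang_ith_moment[OF assms, of 0 1] by simp
  finally show ?thesis .
qed

lemma nn_integral_PiM_component:
  assumes "\<And>i. i \<in> I \<Longrightarrow> prob_space (M i)" "i \<in> I" "f \<in> borel_measurable (M i)"
  shows "(\<integral>\<^sup>+ \<omega>. f (\<omega> i) \<partial>PiM I M) = (\<integral>\<^sup>+ x. f x \<partial>M i)"
proof -
  have "(\<integral>\<^sup>+ \<omega>. f (\<omega> i) \<partial>PiM I M) = (\<integral>\<^sup>+ x. f x \<partial>distr (PiM I M) (M i) (\<lambda>\<omega>. \<omega> i))"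
    using assms by (subst nn_integral_distr) auto
  then show ?thesis
    using distr_PiM_component[of I M i] assms by simp
qed

lemma nn_integral_exponential_weighted_sum:
  "(\<integral>\<^sup>+ e. (\<Sum>i<n. a i * ennreal (e i)) \<partial>PiM UNIV (\<lambda>_::nat. density lborel (exponential_density 1)))
    = (\<Sum>i<n. a i)"
proof -
  let ?E = "density lborel (exponential_density (1::real))"
  have prob: "prob_space ?E"
    by (rule prob_space_exponential_density) simp
  have "(\<lambda>e. ennreal (e i)) \<in> borel_measurable (PiM UNIV (\<lambda>_. ?E))" for i
    using measurable_component_singleton[of i UNIV "\<lambda>_. ?E"] by measurable
  then have "(\<integral>\<^sup>+ e. (\<Sum>i<n. a i * ennreal (e i)) \<partial>PiM UNIV (\<lambda>_. ?E))
      = (\<Sum>i<n. a i * (\<integral>\<^sup>+ e. ennreal (e i) \<partial>PiM UNIV (\<lambda>_. ?E)))"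
    by (simp add: nn_integral_sum nn_integral_cmult)
  also have "\<dots> = (\<Sum>i<n. a i)"
    using prob nn_integral_exponential_mean[of 1] by (simp add: nn_integral_PiM_component)
  finally show ?thesis .
qed

lemma pair_sigma_finite_exponentials:
  "pair_sigma_finite (measure_pmf p) (PiM (UNIV :: nat set) (\<lambda>_. density lborel (exponential_density 1)))"
  unfolding pair_sigma_finite_def
  by (simp add: prob_space_imp_sigma_finite measure_pmf.prob_space_axioms prob_space_PiM
      prob_space_exponential_density)

lemma AE_coal_space:
  "AE \<omega> in coal_space L n. fst \<omega> \<in> set_pmf (jump_chain L n (singletons n)) \<and> (\<forall>i\<le>n. 0 \<le> snd \<omega> i)"
proof -
  let ?J = "measure_pmf (jump_chain L n (singletons n))"
  let ?E = "density lborel (exponential_density (1::real))"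
  let ?M = "PiM (UNIV :: nat set) (\<lambda>_. ?E)"
  interpret pair_sigma_finite ?J ?M
    by (rule pair_sigma_finite_exponentials)
  have "AE x in ?E. 0 \<le> x"
    by (subst AE_density) (auto simp: exponential_density_def)
  then have "AE e in ?M. 0 \<le> e i" for i
    by (intro AE_PiM_component) (auto simp: prob_space_exponential_density)
  then have "AE e in ?M. \<forall>i\<in>{..n}. 0 \<le> e i"
    by (intro eventually_ball_finite) auto
  then have "AE xs in ?J. AE e in ?M. xs \<in> set_pmf (jump_chain L n (singletons n)) \<and> (\<forall>i\<le>n. 0 \<le> e i)"
    by (auto simp: AE_measure_pmf_iff elim: eventually_mono)
  moreover have "{\<omega> \<in> space (?J \<Otimes>\<^sub>M ?M). fst \<omega> \<in> set_pmf (jump_chain L n (singletons n)) \<and> (\<forall>i\<le>n. 0 \<le> snd \<omega> i)}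
      \<in> sets (?J \<Otimes>\<^sub>M ?M)"
    by measurable
  ultimately show ?thesis
    unfolding coal_space_def by (intro AE_pair_measure) simp_all
qed

lemma nn_integral_coal_space_weighted_sum:
  "(\<integral>\<^sup>+ \<omega>. (\<Sum>i<m. a (fst \<omega>) i * ennreal (snd \<omega> i)) \<partial>coal_space L n)
    = (\<integral>\<^sup>+ xs. (\<Sum>i<m. a xs i) \<partial>jump_chain L n (singletons n))"
proof -
  let ?J = "measure_pmf (jump_chain L n (singletons n))"
  let ?E = "density lborel (exponential_density (1::real))"
  let ?M = "PiM (UNIV :: nat set) (\<lambda>_. ?E)"
  let ?G = "\<lambda>\<omega>. \<Sum>i<m. a (fst \<omega>) i * ennreal (snd \<omega> i)"
  interpret pair_sigma_finite ?J ?M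
    by (rule pair_sigma_finite_exponentials)
  have "(\<integral>\<^sup>+ \<omega>. ?G \<omega> \<partial>?J \<Otimes>\<^sub>M ?M) = (\<integral>\<^sup>+ xs. \<integral>\<^sup>+ e. ?G (xs, e) \<partial>?M \<partial>?J)"
  proof (intro M2.nn_integral_fst[symmetric] borel_measurable_sum borel_measurable_times_ennreal)
    fix i
    show "(\<lambda>\<omega>. a (fst \<omega>) i) \<in> borel_measurable (?J \<Otimes>\<^sub>M ?M)"
      by (rule measurable_compose[OF measurable_fst]) simp
    have "(\<lambda>e. ennreal (e i)) \<in> borel_measurable ?M"
      using measurable_component_singleton[of i UNIV "\<lambda>_. ?E"] by measurable
    then show "(\<lambda>\<omega>. ennreal (snd \<omega> i)) \<in> borel_measurable (?J \<Otimes>\<^sub>M ?M)"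
      by (rule measurable_compose[OF measurable_snd])
  qed
  then show ?thesis
    by (simp add: coal_space_def nn_integral_exponential_weighted_sum)
qed

lemma sum_subsets_by_card:
  fixes f :: "nat \<Rightarrow> real"
  assumes "finite P"
  shows "(\<Sum>S\<in>merge_sets P. f (card S)) = (\<Sum>j=2..card P. real (card P choose j) * f j)"
proof -
  let ?A = "\<lambda>j. {S. S \<subseteq> P \<and> card S = j}"
  have "merge_sets P = (\<Union>j\<in>{2..card P}. ?A j)"
    using assms card_mono[of P] by (auto simp: merge_sets_def)
  then have "(\<Sum>S\<in>merge_sets P. f (card S)) = (\<Sum>j=2..card P. \<Sum>S\<in>?A j. f (card S))"
    using assms by (simp only:) (rule sum.UNION_disjoint, auto)
  also have "\<dots> = (\<Sum>j=2..card P. real (card P choose j) * f j)"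
    using n_subsets[OF assms] by simp
  finally show ?thesis .
qed

lemma finite_merge_sets: "finite P \<Longrightarrow> finite (merge_sets P)"
  unfolding merge_sets_def by (rule finite_subset[of _ "Pow P"]) auto

definition merge_blocks :: "partition \<Rightarrow> partition \<Rightarrow> partition" where
  "merge_blocks P S = insert (\<Union>S) (P - S)"

lemma finite_merge_blocks: "finite P \<Longrightarrow> finite (merge_blocks P S)"
  by (simp add: merge_blocks_def)

lemma card_merge_blocks_le:
  assumes "finite P" "S \<in> merge_sets P"
  shows "card (merge_blocks P S) + card S \<le> card P + 1"
proof -
  have S: "S \<subseteq> P" using assms by (simp add: merge_sets_def)
  moreover have "finite S" using S assms(1) finite_subset by blast
  ultimately have "card (P - S) = card P - card S" "card S \<le> card P"
    using assms(1) by (auto simp: card_Diff_subset card_mono)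
  moreover have "card (merge_blocks P S) \<le> Suc (card (P - S))"
    using assms(1) by (simp add: merge_blocks_def card_insert_if)
  ultimately show ?thesis by linarith
qed

lemma card_merge_blocks_less:
  assumes "finite P" "S \<in> merge_sets P"
  shows "card (merge_blocks P S) < card P"
  using card_merge_blocks_le[OF assms] assms(2) by (simp add: merge_sets_def)

definition coalescing_path :: "nat \<Rightarrow> partition \<Rightarrow> partition list \<Rightarrow> bool" where
  "coalescing_path m P xs \<longleftrightarrow> length xs = Suc m \<and> xs ! 0 = P \<and> (\<forall>i\<le>m. finite (xs ! i)) \<and>
     (\<forall>i<m. card (xs ! Suc i) \<le> card (xs ! i) \<and> (2 \<le> card (xs ! i) \<longrightarrow> card (xs ! Suc i) < card (xs ! i)))"

lemma coalescing_path_card_antimono: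
  assumes "coalescing_path m P xs" "i \<le> j" "j \<le> m"
  shows "card (xs ! j) \<le> card (xs ! i)"
  using assms(2,3)
proof (induction j rule: dec_induct)
  case (step j)
  then have "card (xs ! Suc j) \<le> card (xs ! j)"
    using assms(1) by (simp add: coalescing_path_def)
  then show ?case using step by simp
qed simp

lemma coalescing_path_card_le:
  assumes "coalescing_path m P xs" "i \<le> m"
  shows "card (xs ! i) \<le> max 1 (card P - i)"
  using assms(2)
proof (induction i)
  case 0
  then show ?case using assms(1) by (simp add: coalescing_path_def)
next
  case (Suc i)
  then have "card (xs ! i) \<le> max 1 (card P - i)"
    "card (xs ! Suc i) \<le> card (xs ! i)" "2 \<le> card (xs ! i) \<Longrightarrow> card (xs ! Suc i) < card (xs ! i)"
    using assms(1) by (auto simp: coalescing_path_def)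
  then show ?case by (cases "2 \<le> card (xs ! i)") auto
qed

lemma initial_segment_of_downward_closed:
  assumes "\<And>j j'. 1 \<le> j' \<Longrightarrow> j' \<le> j \<Longrightarrow> j \<le> N \<Longrightarrow> Q j \<Longrightarrow> Q j'"
  shows "\<exists>r\<le>N. {j \<in> {1..<Suc N}. Q j} = {1..r}"
  using assms
proof (induction N)
  case 0
  then show ?case by auto
next
  case (Suc N)
  show ?case
  proof (cases "Q (Suc N)")
    case True
    then have "{j \<in> {1..<Suc (Suc N)}. Q j} = {1..Suc N}"
      using Suc.prems by auto
    then show ?thesis by blast
  next
    case False
    obtain r where "r \<le> N" "{j \<in> {1..<Suc N}. Q j} = {1..r}"
      using Suc.IH Suc.prems by (metis le_SucI)
    moreover have "{j \<in> {1..<Suc (Suc N)}. Q j} = {j \<in> {1..<Suc N}. Q j}"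
      using False by (auto simp: less_Suc_eq)
    ultimately show ?thesis by (metis le_SucI)
  qed
qed

lemma num_blocks_ge_before_tau:
  assumes "0 \<le> s" "s < tau L k \<omega>"
  shows "k \<le> num_blocks L \<omega> s"
proof (rule ccontr)
  assume "\<not> k \<le> num_blocks L \<omega> s"
  then have "tau L k \<omega> \<le> s"
    unfolding tau_def using assms(1) by (intro cInf_lower bdd_belowI[of _ 0]) auto
  then show False using assms(2) by simp
qed

lemma finite_singletons: "finite (singletons n)"
  and card_singletons: "card (singletons n) = n"
  unfolding singletons_def by (auto simp: card_image inj_on_def)

definition jump_time :: "real measure \<Rightarrow> partition list \<times> (nat \<Rightarrow> real) \<Rightarrow> nat \<Rightarrow> real" where
  "jump_time L \<omega> j = (\<Sum>i<j. hold L \<omega> i)"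

section \<open>Merger rates\<close>

locale lambda_coalescent =
  fixes L :: "real measure"
  assumes finite_measure_on_unit: "finite_measure_on_unit L"
    and emeasure_positive_part: "emeasure L {0<..1} > 0"
begin

lemma finite_measure_L: "finite_measure L"
  and space_L: "space L = {0..1}"
  and sets_L: "sets L = sets (restrict_space borel {0..1::real})"
  using finite_measure_on_unit by (auto simp: finite_measure_on_unit_def)

lemma integrable_L_bounded:
  assumes "f \<in> borel_measurable borel" "\<And>p. p \<in> {0..1} \<Longrightarrow> \<bar>f p\<bar> \<le> B"
  shows "integrable L (f :: real \<Rightarrow> real)"
proof -
  interpret finite_measure L by (rule finite_measure_L)
  have "AE x in L. norm (f x) \<le> B"
    using assms(2) space_L by auto
  moreover have "f \<in> borel_measurable L"
    using measurable_cong_sets[OF sets_L refl] measurable_restrict_space1 assms(1) by blast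
  ultimately show ?thesis by (rule integrable_const_bound)
qed

lemma integrable_monomial: "integrable L (\<lambda>p. p ^ a * (1 - p) ^ c)"
  by (rule integrable_L_bounded[where B = 1])
    (auto simp: abs_mult power_abs intro!: mult_le_one power_le_one)

definition mass :: real where
  "mass = measure L {0<..1}"

lemma mass_pos: "0 < mass"
proof -
  interpret finite_measure L by (rule finite_measure_L)
  show ?thesis using emeasure_positive_part by (simp add: mass_def emeasure_eq_measure)
qed

lemma integral_indicator_positive_part: "(\<integral>p. indicator {0<..1} p \<partial>L) = mass"
proof -
  interpret finite_measure L by (rule finite_measure_L)
  have "{0<..1::real} \<in> sets L"
    unfolding sets_L by (subst sets_restrict_space_iff) auto
  then show ?thesis by (simp add: mass_def)
qed

lemma coal_rate_nonneg: "0 \<le> coal_rate L b j"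
  unfolding coal_rate_def using space_L by (intro integral_nonneg_AE AE_I2) auto

lemma total_rate_nonneg: "0 \<le> total_rate L P"
  unfolding total_rate_def by (intro sum_nonneg coal_rate_nonneg)

lemma sum_merge_sets_excess_eq_integral:
  assumes "finite P"
  shows "(\<Sum>S\<in>merge_sets P. coal_rate L (card P) (card S) * real (card S - 1))
    = (\<integral>p. (\<Sum>j=2..card P. real (card P choose j) * real (j - 1) * p ^ (j - 2) * (1 - p) ^ (card P - j)) \<partial>L)"
proof -
  let ?b = "card P"
  have "(\<Sum>S\<in>merge_sets P. coal_rate L ?b (card S) * real (card S - 1))
      = (\<Sum>j=2..?b. real (?b choose j) * (coal_rate L ?b j * real (j - 1)))"
    by (rule sum_subsets_by_card[OF assms])
  also have "\<dots> = (\<Sum>j=2..?b. (\<integral>p. real (?b choose j) * real (j - 1) * (p ^ (j - 2) * (1 - p) ^ (?b - j)) \<partial>L))"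
    unfolding coal_rate_def by (simp add: mult_ac)
  also have "\<dots> = (\<integral>p. (\<Sum>j=2..?b. real (?b choose j) * real (j - 1) * (p ^ (j - 2) * (1 - p) ^ (?b - j))) \<partial>L)"
    by (intro Bochner_Integration.integral_sum[symmetric] integrable_mult_right integrable_monomial)
  finally show ?thesis by (simp add: mult_ac)
qed

lemma sum_merge_sets_excess_ge:
  assumes "finite P" "2 \<le> card P"
  shows "real (card P) * mass / 2 \<le> (\<Sum>S\<in>merge_sets P. coal_rate L (card P) (card S) * real (card S - 1))"
proof -
  let ?b = "card P"
  let ?H = "\<lambda>p. \<Sum>j=2..?b. real (?b choose j) * real (j - 1) * p ^ (j - 2) * (1 - p) ^ (?b - j)"
  have "integrable L (indicator {0<..1} :: real \<Rightarrow> real)"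
    by (rule integrable_L_bounded[where B = 1]) (auto simp: indicator_def)
  moreover have "integrable L ?H"
    by (intro Bochner_Integration.integrable_sum) (simp add: mult.assoc integrable_monomial)
  moreover have "real ?b / 2 * indicator {0<..1} p \<le> ?H p" if "p \<in> space L" for p
  proof (cases "p = 0")
    case True
    have "0 \<le> ?H p"
      using True by (intro sum_nonneg mult_nonneg_nonneg) auto
    then show ?thesis using True by simp
  next
    case False
    then show ?thesis
      using that space_L sum_binomial_excess_ge[of p ?b] assms by (auto simp: indicator_def)
  qed
  ultimately have "(\<integral>p. real ?b / 2 * indicator {0<..1} p \<partial>L) \<le> (\<integral>p. ?H p \<partial>L)"
    by (intro integral_mono integrable_mult_right)
  then show ?thesis
    using integral_indicator_positive_part sum_merge_sets_excess_eq_integral[OF assms(1)] by simp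
qed

lemma total_rate_pos:
  assumes "finite P" "2 \<le> card P"
  shows "0 < total_rate L P"
proof -
  have "0 < real (card P) * mass / 2" using mass_pos assms by simp
  also have "\<dots> \<le> (\<Sum>S\<in>merge_sets P. coal_rate L (card P) (card S) * real (card S - 1))"
    by (rule sum_merge_sets_excess_ge[OF assms])
  also have "\<dots> \<le> (\<Sum>S\<in>merge_sets P. coal_rate L (card P) (card S) * real (card P))"
    using assms by (intro sum_mono mult_left_mono coal_rate_nonneg)
      (auto simp: merge_sets_def dest: card_mono[OF assms(1)])
  also have "\<dots> = total_rate L P * real (card P)"
    by (simp add: total_rate_def sum_distrib_right)
  finally show ?thesis using total_rate_nonneg by (simp add: zero_less_mult_iff)
qed


definition merge_prob :: "partition \<Rightarrow> partition \<Rightarrow> real" where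
  "merge_prob P S = (if S \<in> merge_sets P then coal_rate L (card P) (card S) / total_rate L P else 0)"

lemma merge_prob_nonneg: "0 \<le> merge_prob P S"
  unfolding merge_prob_def using coal_rate_nonneg total_rate_nonneg by simp

lemma sum_merge_prob:
  assumes "finite P" "2 \<le> card P"
  shows "(\<Sum>S\<in>merge_sets P. merge_prob P S) = 1"
proof -
  have "(\<Sum>S\<in>merge_sets P. merge_prob P S) = (\<Sum>S\<in>merge_sets P. coal_rate L (card P) (card S)) / total_rate L P"
    unfolding sum_divide_distrib by (intro sum.cong refl) (simp add: merge_prob_def)
  then show ?thesis using total_rate_pos[OF assms] by (simp add: total_rate_def)
qed

lemma
  assumes "finite P" "2 \<le> card P"
  shows pmf_embed_merge_prob: "pmf (embed_pmf (merge_prob P)) S = merge_prob P S"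
    and set_pmf_embed_merge_prob: "set_pmf (embed_pmf (merge_prob P)) \<subseteq> merge_sets P"
proof -
  have "(\<integral>\<^sup>+S. ennreal (merge_prob P S) \<partial>count_space UNIV) = (\<Sum>S\<in>merge_sets P. ennreal (merge_prob P S))"
    using assms by (intro nn_integral_count_space') (auto simp: finite_merge_sets merge_prob_def)
  also have "\<dots> = 1"
    using sum_merge_prob[OF assms] by (simp add: sum_ennreal merge_prob_nonneg)
  finally have prob: "(\<integral>\<^sup>+S. ennreal (merge_prob P S) \<partial>count_space UNIV) = 1" .
  show "pmf (embed_pmf (merge_prob P)) S = merge_prob P S"
    by (rule pmf_embed_pmf) (auto simp: merge_prob_nonneg prob)
  have "set_pmf (embed_pmf (merge_prob P)) = {S. merge_prob P S \<noteq> 0}"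
    by (rule set_embed_pmf) (auto simp: merge_prob_nonneg prob)
  then show "set_pmf (embed_pmf (merge_prob P)) \<subseteq> merge_sets P"
    by (auto simp: merge_prob_def split: if_splits)
qed

lemma coal_step_eq_merge:
  assumes "2 \<le> card P"
  shows "coal_step L P = map_pmf (merge_blocks P) (embed_pmf (merge_prob P))"
  using assms unfolding coal_step_def merge_blocks_def[abs_def] merge_prob_def[abs_def] by simp

lemma set_pmf_coal_step:
  assumes "finite P" "Q \<in> set_pmf (coal_step L P)"
  shows "finite Q" "card Q \<le> card P" "2 \<le> card P \<Longrightarrow> card Q < card P"
proof -
  have "finite Q \<and> card Q \<le> card P \<and> (2 \<le> card P \<longrightarrow> card Q < card P)"
  proof (cases "2 \<le> card P")
    case True
    then obtain S where S: "S \<in> merge_sets P" "Q = merge_blocks P S"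
      using assms set_pmf_embed_merge_prob[OF assms(1) True] by (auto simp: coal_step_eq_merge)
    then show ?thesis
      using card_merge_blocks_less[OF assms(1) S(1)] finite_merge_blocks[OF assms(1)] by simp
  next
    case False
    then show ?thesis using assms by (simp add: coal_step_def)
  qed
  then show "finite Q" "card Q \<le> card P" "2 \<le> card P \<Longrightarrow> card Q < card P" by auto
qed

lemma nn_integral_coal_step:
  assumes "finite P" "2 \<le> card P"
  shows "(\<integral>\<^sup>+Q. f Q \<partial>coal_step L P) = (\<Sum>S\<in>merge_sets P. f (merge_blocks P S) * ennreal (merge_prob P S))"
proof -
  have "(\<integral>\<^sup>+Q. f Q \<partial>coal_step L P) = (\<integral>\<^sup>+S. f (merge_blocks P S) \<partial>embed_pmf (merge_prob P))"
    by (simp add: coal_step_eq_merge[OF assms(2)])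
  also have "\<dots> = (\<Sum>S\<in>merge_sets P. f (merge_blocks P S) * pmf (embed_pmf (merge_prob P)) S)"
    using set_pmf_embed_merge_prob[OF assms] finite_merge_sets[OF assms(1)]
    by (intro nn_integral_measure_pmf_support) auto
  finally show ?thesis by (simp add: pmf_embed_merge_prob[OF assms])
qed

section \<open>The drift inequality\<close>

text \<open>The holding time in \<open>P\<close> has mean \<open>1 / total_rate L P\<close>, so this is the expected contribution
  of the stay in \<open>P\<close> to the integral of \<open>1 / N\<close> up to \<open>tau L k\<close>.\<close>
definition stay_cost :: "nat \<Rightarrow> partition \<Rightarrow> real" where
  "stay_cost k P = (if k \<le> card P then 1 / (real (card P) * total_rate L P) else 0)"

definition lyapunov :: "nat \<Rightarrow> partition \<Rightarrow> real" where
  "lyapunov k P = (2 / mass) * (2 / real k - 1 / max (real (card P)) (real k / 2))"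

lemma stay_cost_nonneg: "0 \<le> stay_cost k P"
  unfolding stay_cost_def using total_rate_nonneg by simp

lemma lyapunov_nonneg:
  assumes "0 < k"
  shows "0 \<le> lyapunov k P"
proof -
  have "1 / max (real (card P)) (real k / 2) \<le> 1 / (real k / 2)"
    using assms by (intro divide_left_mono) auto
  then show ?thesis unfolding lyapunov_def using mass_pos by simp
qed

lemma lyapunov_mono:
  assumes "0 < k" "card Q \<le> card P"
  shows "lyapunov k Q \<le> lyapunov k P"
proof -
  have "1 / max (real (card P)) (real k / 2) \<le> 1 / max (real (card Q)) (real k / 2)"
    using assms by (intro divide_left_mono) auto
  then show ?thesis unfolding lyapunov_def using mass_pos by (intro mult_left_mono) auto
qed

lemma lyapunov_le:
  assumes "0 < k"
  shows "lyapunov k P \<le> 4 / (mass * real k)"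
proof -
  have "lyapunov k P \<le> (2 / mass) * (2 / real k)"
    unfolding lyapunov_def using assms mass_pos by (intro mult_left_mono) auto
  then show ?thesis by simp
qed

lemma lyapunov_decrease_ge:
  assumes "finite P" "2 \<le> k" "k \<le> card P" "S \<in> merge_sets P"
  shows "(2 / mass) * (real (card S - 1) / (real (card P))\<^sup>2) \<le> lyapunov k P - lyapunov k (merge_blocks P S)"
proof -
  let ?b = "real (card P)" and ?b' = "real (card (merge_blocks P S))"
  have S: "2 \<le> card S" "card S \<le> card P"
    using assms(1,4) by (auto simp: merge_sets_def card_mono)
  have "?b' + real (card S) \<le> ?b + 1"
    using card_merge_blocks_le[OF assms(1,4)] by linarith
  then have "(real (card S) - 1) / ?b\<^sup>2 \<le> 1 / max ?b' (real k / 2) - 1 / ?b"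
    using assms S by (intro inverse_max_diff_ge) auto
  then have "(2 / mass) * (real (card S - 1) / ?b\<^sup>2) \<le> (2 / mass) * (1 / max ?b' (real k / 2) - 1 / ?b)"
    using mass_pos S by (intro mult_left_mono) (auto simp: of_nat_diff)
  also have "\<dots> = lyapunov k P - lyapunov k (merge_blocks P S)"
    using assms(3) by (simp add: lyapunov_def max_def algebra_simps)
  finally show ?thesis .
qed

lemma stay_cost_le_lyapunov_drift:
  assumes "finite P" "2 \<le> k" "2 \<le> card P"
  shows "stay_cost k P + (\<Sum>S\<in>merge_sets P. lyapunov k (merge_blocks P S) * merge_prob P S) \<le> lyapunov k P"
proof (cases "k \<le> card P")
  case False
  have "(\<Sum>S\<in>merge_sets P. lyapunov k (merge_blocks P S) * merge_prob P S)
      \<le> (\<Sum>S\<in>merge_sets P. lyapunov k P * merge_prob P S)"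
    using assms card_merge_blocks_less[OF assms(1)]
    by (intro sum_mono mult_right_mono merge_prob_nonneg lyapunov_mono less_imp_le) auto
  also have "\<dots> = lyapunov k P"
    using sum_merge_prob[OF assms(1,3)] by (simp add: sum_distrib_left[symmetric])
  finally show ?thesis using False by (simp add: stay_cost_def)
next
  case True
  let ?b = "real (card P)" and ?\<gamma> = "total_rate L P"
  have b: "0 < ?b" and \<gamma>: "0 < ?\<gamma>"
    using assms total_rate_pos[OF assms(1,3)] by auto
  have "stay_cost k P = (2 / mass) / (?b\<^sup>2 * ?\<gamma>) * (?b * mass / 2)"
    using b \<gamma> mass_pos True by (simp add: stay_cost_def power2_eq_square field_simps)
  also have "\<dots> \<le> (2 / mass) / (?b\<^sup>2 * ?\<gamma>) * (\<Sum>S\<in>merge_sets P. coal_rate L (card P) (card S) * real (card S - 1))"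
    using sum_merge_sets_excess_ge[OF assms(1,3)] b \<gamma> mass_pos by (intro mult_left_mono) auto
  also have "\<dots> = (\<Sum>S\<in>merge_sets P. merge_prob P S * ((2 / mass) * (real (card S - 1) / ?b\<^sup>2)))"
    unfolding sum_distrib_left by (intro sum.cong refl) (simp add: merge_prob_def field_simps)
  also have "\<dots> \<le> (\<Sum>S\<in>merge_sets P. merge_prob P S * (lyapunov k P - lyapunov k (merge_blocks P S)))"
    using lyapunov_decrease_ge[OF assms(1,2) True]
    by (intro sum_mono mult_left_mono merge_prob_nonneg) auto
  also have "\<dots> = lyapunov k P - (\<Sum>S\<in>merge_sets P. lyapunov k (merge_blocks P S) * merge_prob P S)"
    using sum_merge_prob[OF assms(1,3)]
    by (simp add: right_diff_distrib sum_subtractf sum_distrib_left[symmetric] mult.commute)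
  finally show ?thesis by simp
qed

lemma stay_cost_plus_nn_integral_lyapunov_le:
  assumes "finite P" "2 \<le> k"
  shows "ennreal (stay_cost k P) + (\<integral>\<^sup>+Q. ennreal (lyapunov k Q) \<partial>coal_step L P) \<le> ennreal (lyapunov k P)"
proof (cases "2 \<le> card P")
  case True
  have "(\<integral>\<^sup>+Q. ennreal (lyapunov k Q) \<partial>coal_step L P)
      = (\<Sum>S\<in>merge_sets P. ennreal (lyapunov k (merge_blocks P S) * merge_prob P S))"
    using assms by (simp add: nn_integral_coal_step[OF assms(1) True] ennreal_mult' lyapunov_nonneg)
  also have "\<dots> = ennreal (\<Sum>S\<in>merge_sets P. lyapunov k (merge_blocks P S) * merge_prob P S)"
    using assms by (intro sum_ennreal mult_nonneg_nonneg lyapunov_nonneg merge_prob_nonneg) auto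
  finally have "(\<integral>\<^sup>+Q. ennreal (lyapunov k Q) \<partial>coal_step L P)
      = ennreal (\<Sum>S\<in>merge_sets P. lyapunov k (merge_blocks P S) * merge_prob P S)" .
  then show ?thesis
    using stay_cost_le_lyapunov_drift[OF assms True] assms
    by (simp add: ennreal_plus[symmetric] stay_cost_nonneg lyapunov_nonneg merge_prob_nonneg
        sum_nonneg del: ennreal_plus)
next
  case False
  then show ?thesis using assms by (simp add: coal_step_def stay_cost_def)
qed

lemma nn_integral_jump_chain_stay_cost_le:
  assumes "finite P" "2 \<le> k"
  shows "(\<integral>\<^sup>+xs. (\<Sum>i<m. ennreal (stay_cost k (xs ! i))) \<partial>jump_chain L m P) \<le> ennreal (lyapunov k P)"
  using assms(1)
proof (induction m arbitrary: P)
  case 0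
  then show ?case by simp
next
  case (Suc m)
  have IH: "(\<integral>\<^sup>+xs. (\<Sum>i<m. ennreal (stay_cost k (xs ! i))) \<partial>jump_chain L m Q) \<le> ennreal (lyapunov k Q)"
    if "Q \<in> set_pmf (coal_step L P)" for Q
    using Suc.IH set_pmf_coal_step(1)[OF Suc.prems that] by blast
  have "(\<integral>\<^sup>+xs. (\<Sum>i<Suc m. ennreal (stay_cost k (xs ! i))) \<partial>jump_chain L (Suc m) P)
      = (\<integral>\<^sup>+Q. ennreal (stay_cost k P) + (\<integral>\<^sup>+xs. (\<Sum>i<m. ennreal (stay_cost k (xs ! i))) \<partial>jump_chain L m Q) \<partial>coal_step L P)"
    by (simp add: sum.lessThan_Suc_shift nn_integral_add measure_pmf.emeasure_space_1 del: sum.lessThan_Suc)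
  also have "\<dots> \<le> (\<integral>\<^sup>+Q. ennreal (stay_cost k P) + ennreal (lyapunov k Q) \<partial>coal_step L P)"
    using IH by (intro nn_integral_mono_AE) (auto simp: AE_measure_pmf_iff intro: add_left_mono)
  also have "\<dots> = ennreal (stay_cost k P) + (\<integral>\<^sup>+Q. ennreal (lyapunov k Q) \<partial>coal_step L P)"
    by (simp add: nn_integral_add measure_pmf.emeasure_space_1)
  also have "\<dots> \<le> ennreal (lyapunov k P)"
    by (rule stay_cost_plus_nn_integral_lyapunov_le[OF Suc.prems assms(2)])
  finally show ?case .
qed


section \<open>Occupation integral along a path\<close>

lemma set_pmf_jump_chain:
  assumes "finite P" "xs \<in> set_pmf (jump_chain L m P)"
  shows "coalescing_path m P xs"
  using assms
proof (induction m arbitrary: P xs)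
  case 0
  then show ?case by (simp add: coalescing_path_def)
next
  case (Suc m)
  then obtain Q ys where Q: "Q \<in> set_pmf (coal_step L P)" and ys: "ys \<in> set_pmf (jump_chain L m Q)"
    and xs: "xs = P # ys" by auto
  note Q_props = set_pmf_coal_step[OF Suc.prems(1) Q]
  then have "coalescing_path m Q ys"
    using Suc.IH ys by blast
  then show ?case
    using xs Q_props Suc.prems(1) by (auto simp: coalescing_path_def nth_Cons split: nat.split)
qed

lemma hold_nonneg: "0 \<le> snd \<omega> i \<Longrightarrow> 0 \<le> hold L \<omega> i"
  by (simp add: hold_def total_rate_nonneg)

lemma jump_time_mono:
  assumes "\<forall>i\<le>n. 0 \<le> snd \<omega> i" "j' \<le> j" "j \<le> Suc n"
  shows "jump_time L \<omega> j' \<le> jump_time L \<omega> j"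
  unfolding jump_time_def using assms hold_nonneg by (intro sum_mono2) auto

lemma coal_state_eq_nth:
  assumes "coalescing_path n P xs" "\<forall>i\<le>n. 0 \<le> e i" "0 \<le> s"
  obtains r where "r \<le> n" "coal_state L (xs, e) s = xs ! r" "jump_time L (xs, e) r \<le> s"
    "r < n \<Longrightarrow> 2 \<le> card (xs ! r) \<Longrightarrow> s < jump_time L (xs, e) (Suc r)"
proof -
  define Q where "Q j \<longleftrightarrow> 2 \<le> card (xs ! (j - 1)) \<and> jump_time L (xs, e) j \<le> s" for j
  have "Q j'" if "1 \<le> j'" "j' \<le> j" "j \<le> n" "Q j" for j j'
  proof -
    have "card (xs ! (j - 1)) \<le> card (xs ! (j' - 1))"
      using that by (intro coalescing_path_card_antimono[OF assms(1)]) auto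
    moreover have "jump_time L (xs, e) j' \<le> jump_time L (xs, e) j"
      using that assms(2) by (intro jump_time_mono) auto
    ultimately show ?thesis using that(4) by (auto simp: Q_def)
  qed
  then obtain r where r: "r \<le> n" "{j \<in> {1..<Suc n}. Q j} = {1..r}"
    using initial_segment_of_downward_closed[of n Q] by blast
  have "length xs = Suc n" using assms(1) by (simp add: coalescing_path_def)
  then have "coal_state L (xs, e) s = xs ! r"
    unfolding coal_state_def using r by (simp add: Q_def jump_time_def)
  moreover have "jump_time L (xs, e) r \<le> s"
  proof (cases "r = 0")
    case True
    then show ?thesis using assms(3) by (simp add: jump_time_def)
  next
    case False
    then have "r \<in> {j \<in> {1..<Suc n}. Q j}" using r by auto
    then show ?thesis by (simp add: Q_def)
  qed
  moreover have "s < jump_time L (xs, e) (Suc r)" if "r < n" "2 \<le> card (xs ! r)"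
  proof -
    have "Suc r \<notin> {j \<in> {1..<Suc n}. Q j}" using r by auto
    then show ?thesis using that by (auto simp: Q_def)
  qed
  ultimately show ?thesis using that r(1) by blast
qed

lemma nn_integral_before_tau_le:
  assumes "xs \<in> set_pmf (jump_chain L n (singletons n))" "2 \<le> k" "k \<le> n" "\<forall>i\<le>n. 0 \<le> e i"
  shows "(\<integral>\<^sup>+ s\<in>{0..<tau L k (xs, e)}. ennreal (1 / real (num_blocks L (xs, e) s)) \<partial>lborel)
    \<le> (\<Sum>i<n. ennreal (stay_cost k (xs ! i)) * ennreal (e i))"
proof -
  let ?T = "jump_time L (xs, e)"
  define c where "c i = (if k \<le> card (xs ! i) then 1 / real (card (xs ! i)) else 0)" for i
  have path: "coalescing_path n (singletons n) xs"
    using set_pmf_jump_chain[OF finite_singletons assms(1)] .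
  have absorbed: "card (xs ! n) \<le> 1"
    using coalescing_path_card_le[OF path, of n] by (simp add: card_singletons)
  have "ennreal (1 / real (num_blocks L (xs, e) s)) * indicator {0..<tau L k (xs, e)} s
      \<le> (\<Sum>i<n. ennreal (c i) * indicator {?T i..<?T (Suc i)} s)" for s
  proof (cases "0 \<le> s \<and> s < tau L k (xs, e)")
    case True
    then obtain r where r: "r \<le> n" "coal_state L (xs, e) s = xs ! r" "?T r \<le> s"
      "r < n \<Longrightarrow> 2 \<le> card (xs ! r) \<Longrightarrow> s < ?T (Suc r)"
      using coal_state_eq_nth[OF path assms(4)] by blast
    have blocks: "k \<le> card (xs ! r)"
      using num_blocks_ge_before_tau[of s L k "(xs, e)"] True r(2) by (simp add: num_blocks_def)
    then have "r < n"
      using absorbed assms(2) r(1) by (cases "r = n") auto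
    then have "ennreal (1 / real (num_blocks L (xs, e) s)) * indicator {0..<tau L k (xs, e)} s
        = ennreal (c r) * indicator {?T r..<?T (Suc r)} s"
      using True r blocks assms(2) by (simp add: num_blocks_def c_def indicator_def)
    also have "\<dots> \<le> (\<Sum>i<n. ennreal (c i) * indicator {?T i..<?T (Suc i)} s)"
      using \<open>r < n\<close> by (intro member_le_sum) auto
    finally show ?thesis .
  qed (auto simp: indicator_def)
  then have "(\<integral>\<^sup>+ s\<in>{0..<tau L k (xs, e)}. ennreal (1 / real (num_blocks L (xs, e) s)) \<partial>lborel)
      \<le> (\<integral>\<^sup>+ s. (\<Sum>i<n. ennreal (c i) * indicator {?T i..<?T (Suc i)} s) \<partial>lborel)"
    by (intro nn_integral_mono)
  also have "\<dots> = (\<Sum>i<n. ennreal (c i) * emeasure lborel {?T i..<?T (Suc i)})"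
    by (subst nn_integral_sum) (auto simp: nn_integral_cmult_indicator)
  also have "\<dots> = (\<Sum>i<n. ennreal (stay_cost k (xs ! i)) * ennreal (e i))"
  proof (intro sum.cong refl)
    fix i assume "i \<in> {..<n}"
    then have "emeasure lborel {?T i..<?T (Suc i)} = ennreal (hold L (xs, e) i)"
      using jump_time_mono[of n "(xs, e)" i "Suc i"] assms(4) by (simp add: jump_time_def)
    moreover have "c i * hold L (xs, e) i = stay_cost k (xs ! i) * e i"
      by (simp add: c_def stay_cost_def hold_def)
    ultimately show "ennreal (c i) * emeasure lborel {?T i..<?T (Suc i)} = ennreal (stay_cost k (xs ! i)) * ennreal (e i)"
      using \<open>i \<in> {..<n}\<close> assms(4) hold_nonneg[of "(xs, e)" i]
      by (simp add: c_def ennreal_mult[symmetric] stay_cost_nonneg)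
  qed
  finally show ?thesis .
qed

lemma nn_integral_coal_space_le:
  assumes "2 \<le> k" "k \<le> n"
  shows "(\<integral>\<^sup>+ \<omega>. (\<integral>\<^sup>+ s\<in>{0..<tau L k \<omega>}. ennreal (1 / real (num_blocks L \<omega> s)) \<partial>lborel) \<partial>coal_space L n)
    \<le> (\<integral>\<^sup>+ xs. (\<Sum>i<n. ennreal (stay_cost k (xs ! i))) \<partial>jump_chain L n (singletons n))"
proof -
  have "(\<integral>\<^sup>+ \<omega>. (\<integral>\<^sup>+ s\<in>{0..<tau L k \<omega>}. ennreal (1 / real (num_blocks L \<omega> s)) \<partial>lborel) \<partial>coal_space L n)
      \<le> (\<integral>\<^sup>+ \<omega>. (\<Sum>i<n. ennreal (stay_cost k (fst \<omega> ! i)) * ennreal (snd \<omega> i)) \<partial>coal_space L n)"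
    using assms
    by (intro nn_integral_mono_AE eventually_mono[OF AE_coal_space])
      (auto simp: split_paired_all intro!: nn_integral_before_tau_le)
  then show ?thesis
    using nn_integral_coal_space_weighted_sum[where a = "\<lambda>xs i. ennreal (stay_cost k (xs ! i))"] by simp
qed

end

theorem mainTheorem13:
  fixes L :: "real measure"
  assumes "finite_measure_on_unit L"
    and "emeasure L {0<..1} > 0"
  shows "\<exists>C1>0. \<forall>n k. 2 \<le> k \<and> k \<le> n \<longrightarrow>
     (\<integral>\<^sup>+ \<omega>. (\<integral>\<^sup>+ s\<in>{0..<tau L k \<omega>}. ennreal (1 / real (num_blocks L \<omega> s)) \<partial>lborel)
        \<partial>coal_space L n) \<le> ennreal (C1 / real k)"
proof -
  interpret lambda_coalescent L
    using assms by unfold_locales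
  show ?thesis
  proof (intro exI[of _ "4 / mass"] conjI allI impI)
    show "0 < 4 / mass" using mass_pos by simp
    fix n k :: nat
    assume nk: "2 \<le> k \<and> k \<le> n"
    then have "(\<integral>\<^sup>+ \<omega>. (\<integral>\<^sup>+ s\<in>{0..<tau L k \<omega>}. ennreal (1 / real (num_blocks L \<omega> s)) \<partial>lborel) \<partial>coal_space L n)
        \<le> (\<integral>\<^sup>+ xs. (\<Sum>i<n. ennreal (stay_cost k (xs ! i))) \<partial>jump_chain L n (singletons n))"
      by (intro nn_integral_coal_space_le) auto
    also have "\<dots> \<le> ennreal (lyapunov k (singletons n))"
      using nk by (intro nn_integral_jump_chain_stay_cost_le finite_singletons) auto
    also have "\<dots> \<le> ennreal (4 / mass / real k)"
      using nk lyapunov_le[of k] by (intro ennreal_leI) simp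
    finally show "(\<integral>\<^sup>+ \<omega>. (\<integral>\<^sup>+ s\<in>{0..<tau L k \<omega>}. ennreal (1 / real (num_blocks L \<omega> s)) \<partial>lborel)
        \<partial>coal_space L n) \<le> ennreal (4 / mass / real k)" .
  qed
qed

end
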